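(* There is $\varepsilon_0>0$ such that for every fixed $\varepsilon\in(0,\varepsilon_0)$ the following holds. Let $np\ge(1-\varepsilon)\log n$, $G\sim G(n,p)$ on vertex set $[n]$, and let $S\subseteq[n]$ be a fixed set of size $s\ge n/2-n/\log n$. Then, with probability $1-o(1/\log n)$, every vertex of $V_S$ belongs to the $2$-core of $G[S]$.
   Context: For a set $S\subseteq[n]$, $V_S$ is the set of vertices $v\in S$ that either have at least $3$ neighbours in $S$, or have (at least) $2$ neighbours in $S$ each of which has degree at least $2$ in $G[S]$. The $2$-core of a graph is its unique maximal subgraph of minimum degree at least $2$. $G(n,p)$ is the binomial random graph; $\log$ is the natural logarithm. *)

theory Defs
  imports Complex_Main "HOL-Library.Landau_Symbols"
begin

text \<open>Simple graphs on vertex set [n] = {1..n}: a graph is a set of 2-element subsets.\<close>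

definition all_edges :: "nat \<Rightarrow> nat set set" where
  "all_edges n = {e. e \<subseteq> {1..n} \<and> card e = 2}"

definition gnp_prob :: "nat \<Rightarrow> real \<Rightarrow> (nat set set \<Rightarrow> bool) \<Rightarrow> real" where
  "gnp_prob n p P =
     (\<Sum>E\<in>Pow (all_edges n).
        if P E then p ^ card E * (1 - p) ^ (card (all_edges n) - card E) else 0)"

definition nbrs_in :: "nat set set \<Rightarrow> nat set \<Rightarrow> nat \<Rightarrow> nat set" where
  "nbrs_in E T v = {u \<in> T. {u, v} \<in> E}"

definition deg_in :: "nat set set \<Rightarrow> nat set \<Rightarrow> nat \<Rightarrow> nat" where
  "deg_in E T v = card (nbrs_in E T v)"

definition V_set :: "nat set set \<Rightarrow> nat set \<Rightarrow> nat set" where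
  "V_set E S = {v \<in> S. deg_in E S v \<ge> 3 \<or>
      (\<exists>u w. u \<noteq> w \<and> u \<in> nbrs_in E S v \<and> w \<in> nbrs_in E S v \<and>
             deg_in E S u \<ge> 2 \<and> deg_in E S w \<ge> 2)}"

text \<open>Vertex set of the 2-core of G[S]: the maximal subgraph of minimum degree at least 2
  is the subgraph induced on the union of all vertex sets T \<subseteq> S with G[T] of min degree \<ge> 2.\<close>
definition core2 :: "nat set set \<Rightarrow> nat set \<Rightarrow> nat set" where
  "core2 E S = \<Union>{T. T \<subseteq> S \<and> (\<forall>v\<in>T. deg_in E T v \<ge> 2)}"

end

theory Submission
  imports Defs "HOL-Real_Asymp.Real_Asymp"
begin

text \<open>If G[S] contains neither a path x, y, z of three vertices of degree at most 3 in G[S]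
  nor a vertex with three neighbours of degree at most 3, then V_S itself induces a subgraph of
  minimum degree 2 and hence lies in the 2-core. Each of the two configurations consists of 2 or 3
  fixed edges on 3 or 4 vertices together with three vertices that miss all but at most three of
  their roughly n/2 potential neighbours in S. A union bound therefore gives failure probability
  O(n (1 + np)^12 e^{-(35/24) np}), which for np \<ge> (3/4) log n is O(n^{-1/16}) = o(1 / log n).\<close>

section \<open>Edge events in G(n,p)\<close>

lemma finite_all_edges: "finite (all_edges n)"
  unfolding all_edges_def by (rule finite_subset[of _ "Pow {1..n}"]) auto

lemma sum_Pow_binomial_weights:
  fixes p :: real
  assumes "finite R"
  shows "(\<Sum>E\<in>Pow R. p ^ card E * (1 - p) ^ (card R - card E)) = 1"
proof -
  have "(\<Prod>x\<in>R. p + (1 - p)) = (\<Sum>X\<in>Pow R. (\<Prod>x\<in>X. p) * (\<Prod>x\<in>R - X. 1 - p))"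
    by (rule prod_add[OF assms])
  also have "\<dots> = (\<Sum>E\<in>Pow R. p ^ card E * (1 - p) ^ (card R - card E))"
    by (rule sum.cong) (auto simp: card_Diff_subset finite_subset[OF _ assms])
  finally show ?thesis by simp
qed

lemma gnp_prob_nonneg: "0 \<le> p \<Longrightarrow> p \<le> 1 \<Longrightarrow> 0 \<le> gnp_prob n p P"
  unfolding gnp_prob_def by (intro sum_nonneg) auto

lemma gnp_prob_compl: "1 - gnp_prob n p P = gnp_prob n p (\<lambda>E. \<not> P E)"
proof -
  have "1 = (\<Sum>E\<in>Pow (all_edges n). p ^ card E * (1 - p) ^ (card (all_edges n) - card E))"
    using sum_Pow_binomial_weights[OF finite_all_edges] by simp
  also have "\<dots> = gnp_prob n p P + gnp_prob n p (\<lambda>E. \<not> P E)"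
    unfolding gnp_prob_def by (subst sum.distrib[symmetric]) (rule sum.cong, auto)
  finally show ?thesis by simp
qed

lemma gnp_prob_union_bound:
  assumes "0 \<le> p" "p \<le> 1" "finite C"
    and "\<And>E. E \<subseteq> all_edges n \<Longrightarrow> P E \<Longrightarrow> \<exists>c\<in>C. Q c E"
  shows "gnp_prob n p P \<le> (\<Sum>c\<in>C. gnp_prob n p (Q c))"
proof -
  let ?w = "\<lambda>E. p ^ card E * (1 - p) ^ (card (all_edges n) - card E)"
  have w_nonneg: "0 \<le> ?w E" for E using assms by auto
  have "gnp_prob n p P \<le> (\<Sum>E\<in>Pow (all_edges n). \<Sum>c\<in>C. if Q c E then ?w E else 0)"
    unfolding gnp_prob_def
  proof (rule sum_mono)
    fix E assume E: "E \<in> Pow (all_edges n)"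
    show "(if P E then ?w E else 0) \<le> (\<Sum>c\<in>C. if Q c E then ?w E else 0)"
    proof (cases "P E")
      case True
      then obtain c where c: "c \<in> C" "Q c E" using assms(4) E by blast
      have "(if Q c E then ?w E else 0) \<le> (\<Sum>c\<in>C. if Q c E then ?w E else 0)"
        by (rule member_le_sum[OF c(1)]) (use w_nonneg assms(3) in auto)
      then show ?thesis using True c by simp
    qed (use w_nonneg in \<open>auto intro!: sum_nonneg\<close>)
  qed
  also have "\<dots> = (\<Sum>c\<in>C. gnp_prob n p (Q c))"
    unfolding gnp_prob_def by (rule sum.swap)
  finally show ?thesis .
qed

lemma gnp_prob_le_card_mult:
  fixes B :: real
  assumes "0 \<le> p" "p \<le> 1" "finite C"
    and "\<And>E. E \<subseteq> all_edges n \<Longrightarrow> P E \<Longrightarrow> \<exists>c\<in>C. Q c E"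
    and "\<And>c. c \<in> C \<Longrightarrow> gnp_prob n p (Q c) \<le> B"
  shows "gnp_prob n p P \<le> card C * B"
proof -
  have "gnp_prob n p P \<le> (\<Sum>c\<in>C. gnp_prob n p (Q c))"
    by (rule gnp_prob_union_bound) (use assms in auto)
  also have "\<dots> \<le> card C * B"
    by (rule sum_bounded_above) (rule assms(5))
  finally show ?thesis .
qed

lemma gnp_prob_le_add:
  assumes "0 \<le> p" "p \<le> 1" "\<And>E. E \<subseteq> all_edges n \<Longrightarrow> P E \<Longrightarrow> Q1 E \<or> Q2 E"
  shows "gnp_prob n p P \<le> gnp_prob n p Q1 + gnp_prob n p Q2"
  using gnp_prob_union_bound[of p "{True, False}" n P "\<lambda>b. if b then Q1 else Q2"] assms by auto

lemma gnp_prob_present_absent: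
  fixes p :: real
  assumes "0 \<le> p" "p \<le> 1" "F \<subseteq> all_edges n" "A \<subseteq> all_edges n"
  shows "gnp_prob n p (\<lambda>E. F \<subseteq> E \<and> E \<inter> A = {}) \<le> p ^ card F * (1 - p) ^ card A"
proof (cases "F \<inter> A = {}")
  case False
  then have "gnp_prob n p (\<lambda>E. F \<subseteq> E \<and> E \<inter> A = {}) = 0"
    unfolding gnp_prob_def by (intro sum.neutral) auto
  then show ?thesis using assms by simp
next
  case True
  define U where "U = all_edges n"
  define R where "R = U - F - A"
  have fin: "finite U" "finite R" "finite F" "finite A"
    using finite_all_edges assms unfolding R_def U_def by (auto intro: finite_subset)
  have card_U: "card U = card F + card A + card R"
  proof -
    have "U = F \<union> A \<union> R" using assms unfolding R_def U_def by auto
    moreover have "card (F \<union> A \<union> R) = card F + card A + card R"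
      using True fin by (subst card_Un_disjoint) (auto simp: R_def card_Un_disjoint)
    ultimately show ?thesis by simp
  qed
  let ?w = "\<lambda>E. p ^ card E * (1 - p) ^ (card U - card E)"
  have inj: "inj_on (\<lambda>E'. F \<union> E') (Pow R)"
    by (rule inj_onI) (auto simp: R_def)
  have "{E \<in> Pow U. F \<subseteq> E \<and> E \<inter> A = {}} = (\<lambda>E'. F \<union> E') ` Pow R"
  proof (rule set_eqI, rule iffI)
    fix E assume "E \<in> {E \<in> Pow U. F \<subseteq> E \<and> E \<inter> A = {}}"
    then have "E = F \<union> (E - F)" "E - F \<in> Pow R" unfolding R_def by auto
    then show "E \<in> (\<lambda>E'. F \<union> E') ` Pow R" by blast
  qed (use assms True in \<open>auto simp: R_def U_def\<close>)
  then have "gnp_prob n p (\<lambda>E. F \<subseteq> E \<and> E \<inter> A = {}) = (\<Sum>E'\<in>Pow R. ?w (F \<union> E'))"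
    unfolding gnp_prob_def U_def[symmetric]
    by (simp add: sum.inter_filter[symmetric] fin sum.reindex[OF inj])
  also have "\<dots> = (\<Sum>E'\<in>Pow R. (p ^ card F * (1 - p) ^ card A) * (p ^ card E' * (1 - p) ^ (card R - card E')))"
  proof (rule sum.cong[OF refl])
    fix E' assume E': "E' \<in> Pow R"
    then have "finite E'" "card E' \<le> card R" using fin by (auto intro: finite_subset card_mono)
    moreover have "card (F \<union> E') = card F + card E'"
      using E' fin \<open>finite E'\<close> by (subst card_Un_disjoint) (auto simp: R_def)
    ultimately show "?w (F \<union> E') = (p ^ card F * (1 - p) ^ card A) * (p ^ card E' * (1 - p) ^ (card R - card E'))"
      using card_U by (simp add: algebra_simps flip: power_add)
  qed
  also have "\<dots> = p ^ card F * (1 - p) ^ card A"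
    by (simp add: sum_distrib_left[symmetric] sum_Pow_binomial_weights[OF fin(2)])
  finally show ?thesis by simp
qed

section \<open>Low configurations and the 2-core\<close>

definition low_path :: "nat set set \<Rightarrow> nat set \<Rightarrow> bool" where
  "low_path E S \<longleftrightarrow> (\<exists>x y z. x \<in> S \<and> y \<in> S \<and> z \<in> S \<and> x \<noteq> y \<and> y \<noteq> z \<and> x \<noteq> z \<and>
     {x,y} \<in> E \<and> {y,z} \<in> E \<and> deg_in E S x \<le> 3 \<and> deg_in E S y \<le> 3 \<and> deg_in E S z \<le> 3)"

definition low_claw :: "nat set set \<Rightarrow> nat set \<Rightarrow> bool" where
  "low_claw E S \<longleftrightarrow> (\<exists>y a b c. y \<in> S \<and> a \<in> S \<and> b \<in> S \<and> c \<in> S \<and> y \<noteq> a \<and> y \<noteq> b \<and> y \<noteq> c \<and>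
     a \<noteq> b \<and> a \<noteq> c \<and> b \<noteq> c \<and>
     {y,a} \<in> E \<and> {y,b} \<in> E \<and> {y,c} \<in> E \<and> deg_in E S a \<le> 3 \<and> deg_in E S b \<le> 3 \<and> deg_in E S c \<le> 3)"

lemma card_ge_2_obtain:
  assumes "2 \<le> card A"
  obtains a b where "a \<in> A" "b \<in> A" "a \<noteq> b"
  using assms card_le_Suc0_iff_eq[of A] by (cases "finite A") auto

lemma card_ge_3_obtain:
  assumes "3 \<le> card A"
  obtains a b c where "a \<in> A" "b \<in> A" "c \<in> A" "a \<noteq> b" "a \<noteq> c" "b \<noteq> c"
proof -
  obtain B where "B \<subseteq> A" "card B = 3" using obtain_subset_with_card_n[OF assms] by blast
  then show ?thesis using that by (auto simp: card_3_iff)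
qed

lemma card_ge_2_if_distinct:
  assumes "finite A" "a \<in> A" "b \<in> A" "a \<noteq> b"
  shows "2 \<le> card A"
  using assms card_le_Suc0_iff_eq[of A] by fastforce

lemma mem_nbrs_in_iff: "u \<in> nbrs_in E S v \<longleftrightarrow> u \<in> S \<and> {v,u} \<in> E"
  unfolding nbrs_in_def by (auto simp: insert_commute)

lemma finite_nbrs_in: "finite S \<Longrightarrow> finite (nbrs_in E S v)"
  unfolding nbrs_in_def by simp

lemma card_low_nbrs_le_2:
  assumes "\<not> low_claw E S" "\<And>u v. {u,v} \<in> E \<Longrightarrow> u \<noteq> v" "v \<in> S"
  shows "card {u \<in> nbrs_in E S v. deg_in E S u \<le> 3} \<le> 2"
proof (rule ccontr)
  assume "\<not> ?thesis"
  then have "3 \<le> card {u \<in> nbrs_in E S v. deg_in E S u \<le> 3}" by simp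
  then obtain a b c where "a \<in> {u \<in> nbrs_in E S v. deg_in E S u \<le> 3}"
      "b \<in> {u \<in> nbrs_in E S v. deg_in E S u \<le> 3}" "c \<in> {u \<in> nbrs_in E S v. deg_in E S u \<le> 3}"
      "a \<noteq> b" "a \<noteq> c" "b \<noteq> c"
    by (rule card_ge_3_obtain)
  then have "low_claw E S"
    using assms(2,3) unfolding low_claw_def mem_Collect_eq mem_nbrs_in_iff by blast
  then show False using assms(1) by contradiction
qed

lemma low_nbrs_of_low_unique:
  assumes "\<not> low_path E S" "\<And>u v. {u,v} \<in> E \<Longrightarrow> u \<noteq> v" "v \<in> S" "deg_in E S v \<le> 3"
    and "a \<in> nbrs_in E S v" "b \<in> nbrs_in E S v" "deg_in E S a \<le> 3" "deg_in E S b \<le> 3"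
  shows "a = b"
proof (rule ccontr)
  assume "a \<noteq> b"
  have edges: "a \<in> S" "{v, a} \<in> E" "b \<in> S" "{v, b} \<in> E"
    using assms(5,6) by (simp_all add: mem_nbrs_in_iff)
  then have "v \<noteq> a" "v \<noteq> b" using assms(2) by blast+
  then have "low_path E S"
    unfolding low_path_def using edges assms(3,4,7,8) \<open>a \<noteq> b\<close>
    by (intro exI[of _ a] exI[of _ v] exI[of _ b]) (simp add: insert_commute)
  then show False using assms(1) by contradiction
qed

lemma two_high_nbrs:
  assumes "finite S" "\<not> low_path E S" "\<not> low_claw E S" "\<And>u v. {u,v} \<in> E \<Longrightarrow> u \<noteq> v"
    and "v \<in> S" "3 \<le> deg_in E S v"
  obtains a b where "a \<noteq> b" "a \<in> nbrs_in E S v" "b \<in> nbrs_in E S v"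
    "4 \<le> deg_in E S a" "4 \<le> deg_in E S b"
proof -
  let ?N = "nbrs_in E S v"
  let ?L = "{u \<in> ?N. deg_in E S u \<le> 3}"
  let ?H = "{u \<in> ?N. 4 \<le> deg_in E S u}"
  have "card ?L \<le> card ?N - 2"
  proof (cases "deg_in E S v \<le> 3")
    case True
    have "\<forall>a\<in>?L. \<forall>b\<in>?L. a = b"
      using low_nbrs_of_low_unique[OF assms(2,4,5) True] by blast
    then have "card ?L \<le> 1"
      using finite_nbrs_in[OF assms(1)] by (simp add: card_le_Suc0_iff_eq)
    then show ?thesis using assms(6) unfolding deg_in_def by linarith
  next
    case False
    then show ?thesis using card_low_nbrs_le_2[OF assms(3-5)] unfolding deg_in_def by linarith
  qed
  moreover have "card ?N = card ?L + card ?H"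
    using finite_nbrs_in[OF assms(1)] by (subst card_Un_disjoint[symmetric]) (auto intro: arg_cong[where f = card])
  moreover have "3 \<le> card ?N" using assms(6) unfolding deg_in_def .
  ultimately have "2 \<le> card ?H" by linarith
  then show ?thesis using that by (elim card_ge_2_obtain) auto
qed

lemma mem_V_set_if_deg_ge_3: "v \<in> S \<Longrightarrow> 3 \<le> deg_in E S v \<Longrightarrow> v \<in> V_set E S"
  unfolding V_set_def by simp

text \<open>If x has degree 2 its neighbour t other than v has degree at least 4, as otherwise
  v, x, t would be a low path; so x is in V_S through the pair v, t.\<close>
lemma nbr_in_V_set:
  assumes "finite S" "\<not> low_path E S" "\<And>u v. {u,v} \<in> E \<Longrightarrow> u \<noteq> v"
    and "v \<in> S" "2 \<le> deg_in E S v" "deg_in E S v \<le> 3"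
    and "x \<in> nbrs_in E S v" "2 \<le> deg_in E S x"
  shows "x \<in> V_set E S"
proof (cases "3 \<le> deg_in E S x")
  case True
  then show ?thesis using assms(7) mem_V_set_if_deg_ge_3 by (auto simp: nbrs_in_def)
next
  case False
  have xS: "x \<in> S" and vx: "v \<in> nbrs_in E S x"
    using assms(4,7) by (auto simp: mem_nbrs_in_iff insert_commute)
  obtain t where t: "t \<in> nbrs_in E S x" "t \<noteq> v"
    using assms(8) unfolding deg_in_def by (metis card_ge_2_obtain)
  have "4 \<le> deg_in E S t"
    using low_nbrs_of_low_unique[OF assms(2,3) xS _ vx t(1)] False assms(6) t(2) by fastforce
  then show ?thesis
    unfolding V_set_def using xS vx t assms(5) by force
qed

lemma V_set_min_deg:
  assumes "finite S" "\<not> low_path E S" "\<not> low_claw E S" "\<And>u v. {u,v} \<in> E \<Longrightarrow> u \<noteq> v"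
    and "v \<in> V_set E S"
  shows "2 \<le> deg_in E (V_set E S) v"
proof -
  have vS: "v \<in> S" using assms(5) unfolding V_set_def by simp
  have fin: "finite (nbrs_in E (V_set E S) v)"
    using assms(1) by (intro finite_nbrs_in) (auto simp: V_set_def)
  have nbr: "a \<in> nbrs_in E (V_set E S) v" if "a \<in> nbrs_in E S v" "a \<in> V_set E S" for a
    using that by (simp add: nbrs_in_def)
  obtain a b where "a \<noteq> b" "a \<in> nbrs_in E S v" "b \<in> nbrs_in E S v" "a \<in> V_set E S" "b \<in> V_set E S"
  proof (cases "3 \<le> deg_in E S v")
    case True
    obtain a b where ab: "a \<noteq> b" "a \<in> nbrs_in E S v" "b \<in> nbrs_in E S v"
        "4 \<le> deg_in E S a" "4 \<le> deg_in E S b"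
      by (rule two_high_nbrs[OF assms(1-4) vS True])
    then have "a \<in> V_set E S" "b \<in> V_set E S"
      by (auto intro!: mem_V_set_if_deg_ge_3 simp: mem_nbrs_in_iff)
    then show ?thesis using that ab by blast
  next
    case False
    then obtain u w where uw: "u \<noteq> w" "u \<in> nbrs_in E S v" "w \<in> nbrs_in E S v"
        "2 \<le> deg_in E S u" "2 \<le> deg_in E S w"
      using assms(5) unfolding V_set_def by auto
    have "2 \<le> deg_in E S v"
      unfolding deg_in_def using card_ge_2_if_distinct[OF finite_nbrs_in[OF assms(1)] uw(2,3,1)] .
    then show ?thesis
      using that uw nbr_in_V_set[OF assms(1,2,4) vS] False by simp
  qed
  then show ?thesis
    unfolding deg_in_def using card_ge_2_if_distinct[OF fin] nbr by blast
qed

lemma V_set_subset_core2: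
  assumes "finite S" "\<not> low_path E S" "\<not> low_claw E S" "\<And>u v. {u,v} \<in> E \<Longrightarrow> u \<noteq> v"
  shows "V_set E S \<subseteq> core2 E S"
proof -
  have "V_set E S \<subseteq> S" unfolding V_set_def by blast
  then show ?thesis unfolding core2_def using V_set_min_deg[OF assms] by blast
qed

section \<open>Three vertices of low degree\<close>

lemma sum_small_subsets_power_le:
  fixes p :: real
  assumes "0 \<le> p" "finite R" "card R \<le> n"
  shows "(\<Sum>N\<in>{N. N \<subseteq> R \<and> card N \<le> 3}. p ^ card N) \<le> 4 * (1 + real n * p) ^ 3"
proof -
  have split: "{N. N \<subseteq> R \<and> card N \<le> 3} = (\<Union>j\<in>{..3::nat}. {N. N \<subseteq> R \<and> card N = j})" by auto
  have fin: "finite {N. N \<subseteq> R \<and> card N = j}" for j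
    using assms(2) by (rule_tac finite_subset[of _ "Pow R"]) auto
  have "(\<Sum>N\<in>{N. N \<subseteq> R \<and> card N \<le> 3}. p ^ card N) =
        (\<Sum>j\<in>{..3::nat}. \<Sum>N\<in>{N. N \<subseteq> R \<and> card N = j}. p ^ card N)"
    unfolding split by (rule sum.UNION_disjoint) (auto simp: fin)
  also have "\<dots> = (\<Sum>j\<in>{..3::nat}. real (card R choose j) * p ^ j)"
    by (rule sum.cong[OF refl]) (simp add: n_subsets[OF assms(2)])
  also have "\<dots> \<le> (\<Sum>j\<in>{..3::nat}. (1 + real n * p) ^ 3)"
  proof (rule sum_mono)
    fix j :: nat assume j: "j \<in> {..3}"
    have "card R choose j \<le> n ^ j"
    proof (cases "j \<le> card R")
      case True
      then show ?thesis using binomial_le_pow power_mono[OF assms(3)] order_trans by blast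
    qed (simp add: binomial_eq_0)
    then have "real (card R choose j) * p ^ j \<le> real n ^ j * p ^ j"
      using assms(1) by (intro mult_right_mono) (auto simp flip: of_nat_power)
    also have "\<dots> \<le> (1 + real n * p) ^ j"
      using assms(1) by (simp add: power_mult_distrib[symmetric] power_mono)
    also have "\<dots> \<le> (1 + real n * p) ^ 3" using j assms(1) by (intro power_increasing) auto
    finally show "real (card R choose j) * p ^ j \<le> (1 + real n * p) ^ 3" .
  qed
  finally show ?thesis by simp
qed

lemma sum_cube_cartesian:
  fixes f :: "'a \<Rightarrow> real"
  shows "(\<Sum>(a, b, c)\<in>A \<times> A \<times> A. f a * f b * f c) = (sum f A) ^ 3"
  by (simp add: sum.cartesian_product[symmetric] power3_eq_cube sum_distrib_left sum_distrib_right mult_ac)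

definition star :: "nat \<Rightarrow> nat set \<Rightarrow> nat set set" where
  "star x N = (\<lambda>y. {x, y}) ` N"

lemma finite_star: "finite N \<Longrightarrow> finite (star x N)"
  unfolding star_def by simp

lemma card_star: "finite N \<Longrightarrow> card (star x N) = card N"
  unfolding star_def by (rule card_image) (auto simp: inj_on_def doubleton_eq_iff)

lemma star_subset_all_edges: "x \<in> {1..n} \<Longrightarrow> N \<subseteq> {1..n} \<Longrightarrow> x \<notin> N \<Longrightarrow> star x N \<subseteq> all_edges n"
  unfolding star_def all_edges_def by (auto simp: card_insert_if)

lemma star_nbrs_in_subset: "star v (nbrs_in E R v) \<subseteq> E"
  unfolding star_def nbrs_in_def by (auto simp: insert_commute)

lemma star_Diff_nbrs_in_disjoint: "E \<inter> star v (R - nbrs_in E R v) = {}"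
  unfolding star_def nbrs_in_def by (auto simp: insert_commute)

lemma card_nbrs_in_le_deg_in: "finite S \<Longrightarrow> R \<subseteq> S \<Longrightarrow> card (nbrs_in E R v) \<le> deg_in E S v"
  unfolding deg_in_def nbrs_in_def by (rule card_mono) auto

lemma card_star_Un3:
  assumes "x1 \<noteq> x2" "x1 \<noteq> x3" "x2 \<noteq> x3" "{x1, x2, x3} \<inter> (N1 \<union> N2 \<union> N3) = {}"
    and "finite N1" "finite N2" "finite N3"
  shows "card (star x1 N1 \<union> star x2 N2 \<union> star x3 N3) = card N1 + card N2 + card N3"
proof -
  have "star x1 N1 \<inter> star x2 N2 = {}" "(star x1 N1 \<union> star x2 N2) \<inter> star x3 N3 = {}"
    using assms(1-4) unfolding star_def by (auto simp: doubleton_eq_iff)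
  then show ?thesis
    using assms(5-7) by (simp add: card_Un_disjoint card_star finite_star)
qed

lemma gnp_prob_stars:
  fixes p :: real
  assumes p: "0 \<le> p" "p \<le> 1" and S: "S \<subseteq> {1..n}" and W: "W \<subseteq> S"
    and l: "l1 \<in> W" "l2 \<in> W" "l3 \<in> W" "l1 \<noteq> l2" "l1 \<noteq> l3" "l2 \<noteq> l3"
    and F0: "F0 \<subseteq> all_edges n" "\<forall>e\<in>F0. e \<subseteq> W"
    and N: "N1 \<subseteq> S - W" "N2 \<subseteq> S - W" "N3 \<subseteq> S - W" "card N1 \<le> 3" "card N2 \<le> 3" "card N3 \<le> 3"
  shows "gnp_prob n p (\<lambda>E. F0 \<union> star l1 N1 \<union> star l2 N2 \<union> star l3 N3 \<subseteq> E \<and>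
           E \<inter> (star l1 (S - W - N1) \<union> star l2 (S - W - N2) \<union> star l3 (S - W - N3)) = {})
     \<le> p ^ card F0 * (1 - p) ^ (3 * (card S - card W - 3)) * (p ^ card N1 * p ^ card N2 * p ^ card N3)"
proof -
  define R where "R = S - W"
  let ?F = "F0 \<union> star l1 N1 \<union> star l2 N2 \<union> star l3 N3"
  let ?A = "star l1 (R - N1) \<union> star l2 (R - N2) \<union> star l3 (R - N3)"
  have "finite S" using S finite_subset by blast
  then have fin: "finite S" "finite R" "finite F0" "finite N1" "finite N2" "finite N3"
    using N finite_subset[OF F0(1) finite_all_edges] unfolding R_def
    by (auto intro: finite_subset)
  have lR: "{l1, l2, l3} \<inter> R = {}" and Rn: "R \<subseteq> {1..n}" and ln: "{l1, l2, l3} \<subseteq> {1..n}"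
    using l W S unfolding R_def by auto
  have star_edges: "star l M \<subseteq> all_edges n" if "l \<in> {l1, l2, l3}" "M \<subseteq> R" for l M
    using that lR Rn ln by (intro star_subset_all_edges) auto
  have "card (star l1 N1 \<union> star l2 N2 \<union> star l3 N3) = card N1 + card N2 + card N3"
    using lR N fin unfolding R_def by (intro card_star_Un3 l) auto
  moreover have "F0 \<inter> (star l1 N1 \<union> star l2 N2 \<union> star l3 N3) = {}"
    using F0(2) N l unfolding star_def by blast
  moreover have "?F = F0 \<union> (star l1 N1 \<union> star l2 N2 \<union> star l3 N3)" by auto
  ultimately have card_F: "card ?F = card F0 + card N1 + card N2 + card N3"
    using fin by (simp add: card_Un_disjoint finite_star)
  have "card ?A = card (R - N1) + card (R - N2) + card (R - N3)"
    using card_star_Un3[OF l(4-6)] lR fin by auto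
  moreover have "card (R - M) = card R - card M" if "M \<subseteq> R" for M
    using that fin by (simp add: card_Diff_subset finite_subset)
  moreover have "card R = card S - card W"
    unfolding R_def using W fin by (simp add: card_Diff_subset finite_subset)
  ultimately have card_A: "3 * (card S - card W - 3) \<le> card ?A"
    using N unfolding R_def by simp
  have "gnp_prob n p (\<lambda>E. ?F \<subseteq> E \<and> E \<inter> ?A = {}) \<le> p ^ card ?F * (1 - p) ^ card ?A"
    using star_edges N F0(1) unfolding R_def by (intro gnp_prob_present_absent p) auto
  also have "\<dots> \<le> p ^ card ?F * (1 - p) ^ (3 * (card S - card W - 3))"
    using p card_A by (intro mult_left_mono power_decreasing) auto
  also have "\<dots> = p ^ card F0 * (1 - p) ^ (3 * (card S - card W - 3)) * (p ^ card N1 * p ^ card N2 * p ^ card N3)"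
    unfolding card_F by (simp add: power_add mult_ac)
  finally show ?thesis unfolding R_def .
qed

lemma gnp_prob_three_low_deg:
  fixes p :: real
  assumes p: "0 \<le> p" "p \<le> 1" and S: "S \<subseteq> {1..n}" and W: "W \<subseteq> S"
    and l: "l1 \<in> W" "l2 \<in> W" "l3 \<in> W" "l1 \<noteq> l2" "l1 \<noteq> l3" "l2 \<noteq> l3"
    and F0: "F0 \<subseteq> all_edges n" "\<forall>e\<in>F0. e \<subseteq> W"
  shows "gnp_prob n p (\<lambda>E. F0 \<subseteq> E \<and> deg_in E S l1 \<le> 3 \<and> deg_in E S l2 \<le> 3 \<and> deg_in E S l3 \<le> 3)
     \<le> p ^ card F0 * (4 * (1 + real n * p) ^ 3) ^ 3 * (1 - p) ^ (3 * (card S - card W - 3))"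
proof -
  define R where "R = S - W"
  define NS where "NS = {N. N \<subseteq> R \<and> card N \<le> 3}"
  define q where "q = p ^ card F0 * (1 - p) ^ (3 * (card S - card W - 3))"
  have fin: "finite S" "finite R" "finite NS"
    using finite_subset[OF S] unfolding R_def NS_def by auto
  define Q where "Q = (\<lambda>(N1, N2, N3) E.
     F0 \<union> star l1 N1 \<union> star l2 N2 \<union> star l3 N3 \<subseteq> E \<and>
     E \<inter> (star l1 (R - N1) \<union> star l2 (R - N2) \<union> star l3 (R - N3)) = {})"
  have q_nonneg: "0 \<le> q" unfolding q_def using p by simp
  \<comment> \<open>Cover the event by fixing the neighbourhoods N1, N2, N3 of l1, l2, l3 in S - W; all other
    edges from l1, l2, l3 to S - W are then absent.\<close>
  have "gnp_prob n p (\<lambda>E. F0 \<subseteq> E \<and> deg_in E S l1 \<le> 3 \<and> deg_in E S l2 \<le> 3 \<and> deg_in E S l3 \<le> 3)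
      \<le> (\<Sum>c\<in>NS \<times> NS \<times> NS. gnp_prob n p (Q c))"
  proof (rule gnp_prob_union_bound[OF p], use fin in simp)
    fix E assume E: "F0 \<subseteq> E \<and> deg_in E S l1 \<le> 3 \<and> deg_in E S l2 \<le> 3 \<and> deg_in E S l3 \<le> 3"
    have "nbrs_in E R l \<in> NS" if "deg_in E S l \<le> 3" for l
      using card_nbrs_in_le_deg_in[OF fin(1), of R E l] that unfolding NS_def R_def nbrs_in_def by auto
    then show "\<exists>c\<in>NS \<times> NS \<times> NS. Q c E"
      unfolding Q_def using E star_nbrs_in_subset star_Diff_nbrs_in_disjoint
      by (intro bexI[of _ "(nbrs_in E R l1, nbrs_in E R l2, nbrs_in E R l3)"]) (auto simp: Int_Un_distrib)
  qed
  also have "\<dots> \<le> (\<Sum>(N1, N2, N3)\<in>NS \<times> NS \<times> NS. q * (p ^ card N1 * p ^ card N2 * p ^ card N3))"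
  proof (rule sum_mono)
    fix c assume "c \<in> NS \<times> NS \<times> NS"
    then obtain N1 N2 N3 where "c = (N1, N2, N3)" "N1 \<in> NS" "N2 \<in> NS" "N3 \<in> NS" by auto
    then show "gnp_prob n p (Q c) \<le> (case c of (N1, N2, N3) \<Rightarrow> q * (p ^ card N1 * p ^ card N2 * p ^ card N3))"
      using gnp_prob_stars[OF p S W l F0, of N1 N2 N3] unfolding q_def Q_def R_def NS_def by simp
  qed
  also have "\<dots> = q * (\<Sum>(N1, N2, N3)\<in>NS \<times> NS \<times> NS. p ^ card N1 * p ^ card N2 * p ^ card N3)"
    by (simp add: sum_distrib_left case_prod_unfold)
  also have "\<dots> = q * (\<Sum>N\<in>NS. p ^ card N) ^ 3"
    by (simp only: sum_cube_cartesian)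
  also have "\<dots> \<le> q * (4 * (1 + real n * p) ^ 3) ^ 3"
  proof -
    have "card R \<le> n" using card_mono[OF _ S] card_mono[of S R] fin unfolding R_def by force
    then have "(\<Sum>N\<in>NS. p ^ card N) \<le> 4 * (1 + real n * p) ^ 3"
      unfolding NS_def using p fin by (intro sum_small_subsets_power_le) auto
    then show ?thesis using p q_nonneg by (intro mult_left_mono power_mono sum_nonneg) auto
  qed
  finally show ?thesis unfolding q_def by (simp add: mult_ac)
qed

lemma gnp_prob_low_path:
  fixes p :: real
  assumes p: "0 \<le> p" "p \<le> 1" and S: "S \<subseteq> {1..n}"
  shows "gnp_prob n p (\<lambda>E. low_path E S)
    \<le> real n ^ 3 * p ^ 2 * (4 * (1 + real n * p) ^ 3) ^ 3 * (1 - p) ^ (3 * (card S - 7))"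
proof -
  define C where "C = {(x, y, z) \<in> S \<times> S \<times> S. x \<noteq> y \<and> y \<noteq> z \<and> x \<noteq> z}"
  define Q where "Q = (\<lambda>(x, y, z) E. {{x, y}, {y, z}} \<subseteq> E \<and>
     deg_in E S x \<le> 3 \<and> deg_in E S y \<le> 3 \<and> deg_in E S z \<le> 3)"
  define B where "B = p ^ 2 * (4 * (1 + real n * p) ^ 3) ^ 3 * (1 - p) ^ (3 * (card S - 7))"
  have fin: "finite S" using S finite_subset by blast
  have "gnp_prob n p (\<lambda>E. low_path E S) \<le> card C * B"
  proof (rule gnp_prob_le_card_mult[OF p])
    show "finite C" by (rule finite_subset[of _ "S \<times> S \<times> S"]) (use fin in \<open>auto simp: C_def\<close>)
    show "\<exists>c\<in>C. Q c E" if "low_path E S" for E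
      using that unfolding low_path_def C_def Q_def by fastforce
    fix c assume "c \<in> C"
    then obtain x y z where c: "c = (x, y, z)" "{x, y, z} \<subseteq> S" "x \<noteq> y" "y \<noteq> z" "x \<noteq> z"
      unfolding C_def by auto
    have "gnp_prob n p (Q c) \<le> p ^ card {{x, y}, {y, z}} * (4 * (1 + real n * p) ^ 3) ^ 3
        * (1 - p) ^ (3 * (card S - card {x, y, z} - 3))"
      unfolding Q_def c(1) prod.case using c S
      by (intro gnp_prob_three_low_deg p) (auto simp: all_edges_def)
    also have "\<dots> \<le> B"
    proof -
      have cards: "card {{x, y}, {y, z}} = 2" "card {x, y, z} = 3" using c by (auto simp: doubleton_eq_iff)
      show ?thesis unfolding B_def cards using p by (intro mult_left_mono power_decreasing) auto
    qed
    finally show "gnp_prob n p (Q c) \<le> B" .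
  qed
  also have "\<dots> \<le> real n ^ 3 * B"
  proof -
    have "card C \<le> card (S \<times> S \<times> S)" by (rule card_mono) (auto simp: C_def fin)
    also have "\<dots> = card S ^ 3" by (simp add: card_cartesian_product power3_eq_cube)
    also have "\<dots> \<le> n ^ 3" using card_mono[OF _ S] by (simp add: power_mono)
    finally show ?thesis
      unfolding B_def using p by (intro mult_right_mono) (auto simp flip: of_nat_power)
  qed
  finally show ?thesis unfolding B_def by (simp add: mult_ac)
qed

lemma gnp_prob_low_claw:
  fixes p :: real
  assumes p: "0 \<le> p" "p \<le> 1" and S: "S \<subseteq> {1..n}"
  shows "gnp_prob n p (\<lambda>E. low_claw E S)
    \<le> real n ^ 4 * p ^ 3 * (4 * (1 + real n * p) ^ 3) ^ 3 * (1 - p) ^ (3 * (card S - 7))"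
proof -
  define C where "C = {(y, a, b, c) \<in> S \<times> S \<times> S \<times> S.
     y \<noteq> a \<and> y \<noteq> b \<and> y \<noteq> c \<and> a \<noteq> b \<and> a \<noteq> c \<and> b \<noteq> c}"
  define Q where "Q = (\<lambda>(y, a, b, c) E. {{y, a}, {y, b}, {y, c}} \<subseteq> E \<and>
     deg_in E S a \<le> 3 \<and> deg_in E S b \<le> 3 \<and> deg_in E S c \<le> 3)"
  define B where "B = p ^ 3 * (4 * (1 + real n * p) ^ 3) ^ 3 * (1 - p) ^ (3 * (card S - 7))"
  have fin: "finite S" using S finite_subset by blast
  have "gnp_prob n p (\<lambda>E. low_claw E S) \<le> card C * B"
  proof (rule gnp_prob_le_card_mult[OF p])
    show "finite C" by (rule finite_subset[of _ "S \<times> S \<times> S \<times> S"]) (use fin in \<open>auto simp: C_def\<close>)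
    show "\<exists>c\<in>C. Q c E" if "low_claw E S" for E
      using that unfolding low_claw_def C_def Q_def by fastforce
    fix t assume "t \<in> C"
    then obtain y a b c where t: "t = (y, a, b, c)" "{y, a, b, c} \<subseteq> S"
      "y \<noteq> a" "y \<noteq> b" "y \<noteq> c" "a \<noteq> b" "a \<noteq> c" "b \<noteq> c"
      unfolding C_def by auto
    have "gnp_prob n p (Q t) \<le> p ^ card {{y, a}, {y, b}, {y, c}} * (4 * (1 + real n * p) ^ 3) ^ 3
        * (1 - p) ^ (3 * (card S - card {y, a, b, c} - 3))"
      unfolding Q_def t(1) prod.case using t S
      by (intro gnp_prob_three_low_deg p) (auto simp: all_edges_def)
    also have "\<dots> \<le> B"
    proof -
      have cards: "card {{y, a}, {y, b}, {y, c}} = 3" "card {y, a, b, c} = 4"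
        using t by (auto simp: doubleton_eq_iff)
      show ?thesis unfolding B_def cards using p by (intro mult_left_mono power_decreasing) auto
    qed
    finally show "gnp_prob n p (Q t) \<le> B" .
  qed
  also have "\<dots> \<le> real n ^ 4 * B"
  proof -
    have "card C \<le> card (S \<times> S \<times> S \<times> S)" by (rule card_mono) (auto simp: C_def fin)
    also have "\<dots> = card S ^ 4" by (simp add: card_cartesian_product power4_eq_xxxx)
    also have "\<dots> \<le> n ^ 4" using card_mono[OF _ S] by (simp add: power_mono)
    finally show ?thesis
      unfolding B_def using p by (intro mult_right_mono) (auto simp flip: of_nat_power)
  qed
  finally show ?thesis unfolding B_def by (simp add: mult_ac)
qed

lemma gnp_prob_V_set_not_subset_core2:
  fixes p :: real
  assumes p: "0 \<le> p" "p \<le> 1" and S: "S \<subseteq> {1..n}"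
  shows "gnp_prob n p (\<lambda>E. \<not> V_set E S \<subseteq> core2 E S)
    \<le> (real n ^ 3 * p ^ 2 + real n ^ 4 * p ^ 3) * (4 * (1 + real n * p) ^ 3) ^ 3 * (1 - p) ^ (3 * (card S - 7))"
proof -
  have "gnp_prob n p (\<lambda>E. \<not> V_set E S \<subseteq> core2 E S)
      \<le> gnp_prob n p (\<lambda>E. low_path E S) + gnp_prob n p (\<lambda>E. low_claw E S)"
  proof (rule gnp_prob_le_add[OF p])
    fix E assume "E \<subseteq> all_edges n" "\<not> V_set E S \<subseteq> core2 E S"
    moreover have "finite S" using S finite_subset by blast
    ultimately show "low_path E S \<or> low_claw E S"
      using V_set_subset_core2[of S E] unfolding all_edges_def by fastforce
  qed
  then show ?thesis
    using gnp_prob_low_path[OF p S] gnp_prob_low_claw[OF p S] by (simp add: algebra_simps)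
qed

section \<open>Numerical estimates\<close>

lemma one_minus_power_le_exp:
  fixes p :: real
  assumes "0 \<le> p" "p \<le> 1"
  shows "(1 - p) ^ m \<le> exp (- p * real m)"
proof -
  have "(1 - p) ^ m \<le> exp (- p) ^ m"
    using assms exp_ge_add_one_self[of "- p"] by (intro power_mono) auto
  then show ?thesis by (simp add: exp_of_nat_mult[symmetric] mult_ac)
qed

text \<open>For ln n \<ge> 72 the loss 3 np / ln n coming from |S| \<ge> n/2 - n / ln n is at most np / 24.\<close>
lemma non_edge_factor_le:
  fixes p :: real and n k :: nat
  assumes p: "0 \<le> p" "p \<le> 1" and ln_n: "72 \<le> ln (real n)"
    and k: "real n / 2 - real n / ln (real n) \<le> real k"
  shows "(1 - p) ^ (3 * (k - 7)) \<le> exp 21 * exp (- (35 / 24) * (real n * p))"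
proof -
  define l where "l = real n * p"
  have "l / ln (real n) \<le> l / 72"
    using p ln_n unfolding l_def by (intro divide_left_mono) auto
  moreover have "l / 2 - l / ln (real n) \<le> p * real k"
  proof -
    have "p * (real n / 2 - real n / ln (real n)) \<le> p * real k" using k p by (intro mult_left_mono) auto
    then show ?thesis unfolding l_def by (simp add: algebra_simps)
  qed
  moreover have "3 * (p * real k) - 21 * p \<le> p * real (3 * (k - 7))"
  proof -
    have "3 * real k - 21 \<le> real (3 * (k - 7))" by linarith
    then have "p * (3 * real k - 21) \<le> p * real (3 * (k - 7))" using p by (intro mult_left_mono) auto
    then show ?thesis by (simp add: algebra_simps)
  qed
  ultimately have "- p * real (3 * (k - 7)) \<le> 21 + (- (35 / 24) * l)" using p by linarith
  then have "exp (- p * real (3 * (k - 7))) \<le> exp 21 * exp (- (35 / 24) * l)"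
    by (simp flip: exp_add)
  then show ?thesis using one_minus_power_le_exp[OF p] order_trans unfolding l_def by blast
qed

lemma one_plus_power_12_le_exp:
  fixes l :: real
  assumes "0 \<le> l"
  shows "(1 + l) ^ 12 \<le> 288 ^ 12 * exp (l / 24)"
proof -
  have "(1 + l) / 288 \<le> 1 + l / 288" using assms by simp
  also have "\<dots> \<le> exp (l / 288)" by (rule exp_ge_add_one_self)
  finally have "((1 + l) / 288) ^ 12 \<le> exp (l / 288) ^ 12" using assms by (intro power_mono) auto
  also have "\<dots> = exp (l / 24)" by (simp add: exp_of_nat_mult[symmetric])
  finally show ?thesis by (simp add: power_divide field_simps)
qed

lemma edge_factor_le:
  fixes p :: real and n :: nat
  assumes "0 \<le> p"
  shows "(real n ^ 3 * p ^ 2 + real n ^ 4 * p ^ 3) * (4 * (1 + real n * p) ^ 3) ^ 3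
    \<le> 128 * real n * (1 + real n * p) ^ 12"
proof -
  define l where "l = real n * p"
  have l: "0 \<le> l" unfolding l_def using assms by simp
  have "l ^ 2 \<le> (1 + l) ^ 2" using l by (intro power_mono) auto
  also have "\<dots> \<le> (1 + l) ^ 3" using l by (intro power_increasing) auto
  finally have "l ^ 2 \<le> (1 + l) ^ 3" .
  moreover have "l ^ 3 \<le> (1 + l) ^ 3" using l by (intro power_mono) auto
  ultimately have "l ^ 2 + l ^ 3 \<le> 2 * (1 + l) ^ 3" by simp
  then have "real n * (l ^ 2 + l ^ 3) * (64 * (1 + l) ^ 9) \<le> real n * (2 * (1 + l) ^ 3) * (64 * (1 + l) ^ 9)"
    using l by (intro mult_right_mono mult_left_mono) auto
  moreover have "real n ^ 3 * p ^ 2 + real n ^ 4 * p ^ 3 = real n * (l ^ 2 + l ^ 3)"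
    unfolding l_def by (simp add: power_mult_distrib power2_eq_square power3_eq_cube power4_eq_xxxx algebra_simps)
  moreover have "(4 * (1 + l) ^ 3) ^ 3 = 64 * (1 + l) ^ 9" by (simp add: power_mult_distrib flip: power_mult)
  moreover have "real n * (2 * (1 + l) ^ 3) * (64 * (1 + l) ^ 9) = 128 * real n * (1 + l) ^ 12"
    by (simp add: algebra_simps flip: power_add)
  ultimately show ?thesis unfolding l_def by simp
qed

lemma failure_bound_le_powr:
  fixes p :: real and n k :: nat
  assumes p: "0 \<le> p" "p \<le> 1" and ln_n: "72 \<le> ln (real n)"
    and np: "(3 / 4) * ln (real n) \<le> real n * p"
    and k: "real n / 2 - real n / ln (real n) \<le> real k"
  shows "(real n ^ 3 * p ^ 2 + real n ^ 4 * p ^ 3) * (4 * (1 + real n * p) ^ 3) ^ 3 * (1 - p) ^ (3 * (k - 7))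
    \<le> 128 * exp 21 * 288 ^ 12 * real n powr (- 1 / 16)"
proof -
  define l where "l = real n * p"
  have n: "0 < real n" using ln_n by (cases "n = 0") auto
  have l: "0 \<le> l" unfolding l_def using p n by simp
  have "(real n ^ 3 * p ^ 2 + real n ^ 4 * p ^ 3) * (4 * (1 + l) ^ 3) ^ 3 * (1 - p) ^ (3 * (k - 7))
      \<le> (128 * real n * (1 + l) ^ 12) * (exp 21 * exp (- (35 / 24) * l))"
    unfolding l_def
    by (rule mult_mono[OF edge_factor_le[OF p(1)] non_edge_factor_le[OF p ln_n k]]) (use n p in auto)
  also have "\<dots> \<le> (128 * real n * (288 ^ 12 * exp (l / 24))) * (exp 21 * exp (- (35 / 24) * l))"
    using one_plus_power_12_le_exp[OF l] n by (intro mult_right_mono mult_left_mono) auto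
  also have "\<dots> = 128 * exp 21 * 288 ^ 12 * (real n * exp (- (17 / 12) * l))"
    by (simp add: mult_ac flip: exp_add)
  also have "\<dots> \<le> 128 * exp 21 * 288 ^ 12 * (real n * exp (- (17 / 12) * ((3 / 4) * ln (real n))))"
    using np n unfolding l_def by (intro mult_left_mono) (auto simp: mult_ac)
  also have "\<dots> = 128 * exp 21 * 288 ^ 12 * (real n * real n powr (- 17 / 16))"
    using n by (simp add: powr_def)
  also have "\<dots> = 128 * exp 21 * 288 ^ 12 * real n powr (- 1 / 16)"
    using n by (simp add: powr_mult_base)
  finally show ?thesis unfolding l_def .
qed

lemma gnp_prob_V_set_not_subset_core2_le_powr:
  fixes p :: real
  assumes p: "0 \<le> p" "p \<le> 1" and S: "S \<subseteq> {1..n}" and ln_n: "72 \<le> ln (real n)"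
    and np: "(3 / 4) * ln (real n) \<le> real n * p"
    and card_S: "real n / 2 - real n / ln (real n) \<le> real (card S)"
  shows "gnp_prob n p (\<lambda>E. \<not> V_set E S \<subseteq> core2 E S) \<le> 128 * exp 21 * 288 ^ 12 * real n powr (- 1 / 16)"
  using gnp_prob_V_set_not_subset_core2[OF p S] failure_bound_le_powr[OF p ln_n np card_S] by linarith

theorem lemma4p10:
  shows "\<exists>\<epsilon>0::real. \<epsilon>0 > 0 \<and>
    (\<forall>\<epsilon>::real. 0 < \<epsilon> \<and> \<epsilon> < \<epsilon>0 \<longrightarrow>
      (\<forall>(p :: nat \<Rightarrow> real) (S :: nat \<Rightarrow> nat set).
        (\<forall>n. 0 \<le> p n \<and> p n \<le> 1) \<longrightarrow>
        (\<forall>\<^sub>F n in sequentially. real n * p n \<ge> (1 - \<epsilon>) * ln (real n)) \<longrightarrow>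
        (\<forall>n. S n \<subseteq> {1..n}) \<longrightarrow>
        (\<forall>\<^sub>F n in sequentially. real (card (S n)) \<ge> real n / 2 - real n / ln (real n)) \<longrightarrow>
        (\<lambda>n. 1 - gnp_prob n (p n) (\<lambda>E. V_set E (S n) \<subseteq> core2 E (S n)))
          \<in> o[sequentially](\<lambda>n. 1 / ln (real n))))"
proof (intro exI[of _ "1 / 4 :: real"] conjI allI impI)
  fix \<epsilon> :: real and p :: "nat \<Rightarrow> real" and S :: "nat \<Rightarrow> nat set"
  assume \<epsilon>: "0 < \<epsilon> \<and> \<epsilon> < 1 / 4" and p: "\<forall>n. 0 \<le> p n \<and> p n \<le> 1"
    and np: "\<forall>\<^sub>F n in sequentially. real n * p n \<ge> (1 - \<epsilon>) * ln (real n)"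
    and S: "\<forall>n. S n \<subseteq> {1..n}"
    and card_S: "\<forall>\<^sub>F n in sequentially. real (card (S n)) \<ge> real n / 2 - real n / ln (real n)"
  let ?f = "\<lambda>n. 1 - gnp_prob n (p n) (\<lambda>E. V_set E (S n) \<subseteq> core2 E (S n))"
  have ln_n: "\<forall>\<^sub>F n in sequentially. 72 \<le> ln (real n)" by real_asymp
  have "?f \<in> O[sequentially](\<lambda>n. real n powr (- 1 / 16))"
  proof (rule bigoI[of _ "128 * exp 21 * 288 ^ 12"])
    show "\<forall>\<^sub>F n in sequentially. norm (?f n) \<le> 128 * exp 21 * 288 ^ 12 * norm (real n powr (- 1 / 16))"
      using np card_S ln_n
    proof eventually_elim
      case (elim n)
      have p_n: "0 \<le> p n" "p n \<le> 1" using p by auto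
      have "(3 / 4) * ln (real n) \<le> (1 - \<epsilon>) * ln (real n)"
        using \<epsilon> elim(3) by (intro mult_right_mono) auto
      then have "(3 / 4) * ln (real n) \<le> real n * p n" using elim(1) by linarith
      then show ?case
        using gnp_prob_V_set_not_subset_core2_le_powr[OF p_n S[rule_format] elim(3) _ elim(2)]
          gnp_prob_nonneg[OF p_n] by (simp add: gnp_prob_compl)
    qed
  qed
  also have "(\<lambda>n::nat. real n powr (- 1 / 16)) \<in> o[sequentially](\<lambda>n. 1 / ln (real n))"
    by real_asymp
  finally show "?f \<in> o[sequentially](\<lambda>n. 1 / ln (real n))" .
qed simp

end
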